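(* Let $L$ be a finite extension of $\mathbb{Z}_\mathrm{max}$. Then $L\cong F^{(n)}$ as extensions of $\mathbb{Z}_\mathrm{max}$ for some positive integer $n$.
   Context: A (commutative) semiring is a set with two binary operations, addition and multiplication, each making it a commutative monoid (with identities $0$ and $1$), such that multiplication distributes over addition. A semifield is a semiring in which every nonzero element is a multiplicative unit. $\mathbb{Z}_\mathrm{max}=\mathbb{Z}\cup\{-\infty\}$ is the semifield whose addition is $\max$ and whose multiplication is ordinary addition of integers (so its zero is $-\infty$ and its one is the integer $0$). Writing $u$ for the integer $1$ viewed in $\mathbb{Z}_\mathrm{max}$, we have $\mathbb{Z}_\mathrm{max}=\{0\}\cup\{u^k: k\in\mathbb{Z}\}$ with $u^a+u^b=u^{\max(a,b)}$. An extension of a semifield $K$ is a semifield $L$ together with an injective semiring homomorphism $K\to L$; it is finite if this homomorphism makes $L$ a finitely generated $K$-semimodule. For a positive integer $n$, $F^{(n)}$ denotes the extension of $\mathbb{Z}_\mathrm{max}$ given by $L=\mathbb{Z}_\mathrm{max}$ and the injective homomorphism $\mathbb{Z}_\mathrm{max}\to\mathbb{Z}_\mathrm{max}$, $u^k\mapsto u^{nk}$, $0\mapsto 0$. An isomorphism of extensions of $K$ is a semiring isomorphism compatible with the embeddings of $K$. *)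

theory Defs
  imports Main
begin

text \<open>The semifield Z_max, represented on int option: None is -infinity (the
  semiring zero), Some k is u^k.  Addition is max, multiplication is integer addition.\<close>

type_synonym zmax = "int option"

fun zmax_add :: "zmax \<Rightarrow> zmax \<Rightarrow> zmax" where
  "zmax_add None y = y"
| "zmax_add x None = x"
| "zmax_add (Some a) (Some b) = Some (max a b)"

fun zmax_mult :: "zmax \<Rightarrow> zmax \<Rightarrow> zmax" where
  "zmax_mult (Some a) (Some b) = Some (a + b)"
| "zmax_mult _ _ = None"

definition zmax_zero :: zmax where "zmax_zero = None"
definition zmax_one :: zmax where "zmax_one = Some 0"

definition is_semifield :: "'a::comm_semiring_1 itself \<Rightarrow> bool" where
  "is_semifield _ \<longleftrightarrow> (\<forall>x::'a. x \<noteq> 0 \<longrightarrow> (\<exists>y. x * y = 1))"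

definition zmax_hom_to :: "(zmax \<Rightarrow> 'a::comm_semiring_1) \<Rightarrow> bool" where
  "zmax_hom_to \<phi> \<longleftrightarrow>
     (\<forall>x y. \<phi> (zmax_add x y) = \<phi> x + \<phi> y) \<and>
     (\<forall>x y. \<phi> (zmax_mult x y) = \<phi> x * \<phi> y) \<and>
     \<phi> zmax_zero = 0 \<and> \<phi> zmax_one = 1"

definition hom_to_zmax :: "('a::comm_semiring_1 \<Rightarrow> zmax) \<Rightarrow> bool" where
  "hom_to_zmax \<psi> \<longleftrightarrow>
     (\<forall>x y. \<psi> (x + y) = zmax_add (\<psi> x) (\<psi> y)) \<and>
     (\<forall>x y. \<psi> (x * y) = zmax_mult (\<psi> x) (\<psi> y)) \<and>
     \<psi> 0 = zmax_zero \<and> \<psi> 1 = zmax_one"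

definition zmax_extension :: "(zmax \<Rightarrow> 'a::comm_semiring_1) \<Rightarrow> bool" where
  "zmax_extension \<phi> \<longleftrightarrow> is_semifield TYPE('a) \<and> zmax_hom_to \<phi> \<and> inj \<phi>"

text \<open>Finite: L is a finitely generated Z_max-semimodule via \<phi>
  (every element is a Z_max-linear combination of a fixed finite set).\<close>
definition finite_zmax_extension :: "(zmax \<Rightarrow> 'a::comm_semiring_1) \<Rightarrow> bool" where
  "finite_zmax_extension \<phi> \<longleftrightarrow> zmax_extension \<phi> \<and>
     (\<exists>S::'a set. finite S \<and> (\<forall>x. \<exists>c::'a \<Rightarrow> zmax. x = (\<Sum>s\<in>S. \<phi> (c s) * s)))"

text \<open>The embedding of F^(n): u^k \<mapsto> u^(nk), 0 \<mapsto> 0.\<close>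
definition Fn_embed :: "nat \<Rightarrow> zmax \<Rightarrow> zmax" where
  "Fn_embed n x = map_option (\<lambda>k. int n * k) x"

definition iso_to_Fn :: "(zmax \<Rightarrow> 'a::comm_semiring_1) \<Rightarrow> nat \<Rightarrow> bool" where
  "iso_to_Fn \<phi> n \<longleftrightarrow>
     (\<exists>\<psi>::'a \<Rightarrow> zmax. bij \<psi> \<and> hom_to_zmax \<psi> \<and> (\<forall>x. \<psi> (\<phi> x) = Fn_embed n x))"

end

theory Submission
  imports Defs
begin

text \<open>Since the embedding preserves \<open>u\<^sup>0 + u\<^sup>0 = u\<^sup>0\<close>, \<open>L\<close> is idempotent and carries the natural
  order \<open>x \<preceq> y \<longleftrightarrow> x + y = y\<close>.  Finite generation makes \<open>L\<close> archimedean over the powers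
  of \<open>u\<close> and makes every interval \<open>[1, c]\<close> finite; since \<open>(z + 1)\<^sup>d\<close> absorbs \<open>z\<^sup>d\<close>, no
  nontrivial element has finite order.  These facts rule out a pair \<open>a, b \<succ> 1\<close> with
  \<open>a b = a + b\<close>, and that is exactly what makes the natural order total.  In a totally ordered
  idempotent semifield with finite intervals the least element \<open>g \<succ> 1\<close> generates the
  multiplicative group, so \<open>k \<mapsto> g\<^sup>k\<close> identifies \<open>L\<close> with \<open>\<int>\<^sub>m\<^sub>a\<^sub>x\<close>; under this
  identification the embedding is an injective endomorphism of \<open>\<int>\<^sub>m\<^sub>a\<^sub>x\<close>, i.e.\ \<open>u \<mapsto> u\<^sup>n\<close>
  with \<open>n > 0\<close>.\<close>

definition natural_le :: "'a::comm_semiring_1 \<Rightarrow> 'a \<Rightarrow> bool" (infix "\<preceq>" 50) where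
  "x \<preceq> y \<longleftrightarrow> x + y = y"

locale idempotent_semifield =
  assumes one_add_one: "1 + 1 = (1::'a::comm_semiring_1)"
    and right_inverse_exists: "(x::'a) \<noteq> 0 \<Longrightarrow> \<exists>y. x * y = 1"
begin

lemma add_idem: "x + x = (x::'a)"
proof -
  have "x + x = x * (1 + 1)" by (simp only: distrib_left mult_1_right)
  then show ?thesis by (simp only: one_add_one mult_1_right)
qed

lemma add_left_distrib_idem: "c + (a + b) = (c + a) + (c + (b::'a))"
  by (metis add.assoc add.left_commute add_idem)

definition recip :: "'a \<Rightarrow> 'a" where
  "recip x = (SOME y. x * y = 1)"

lemma mult_recip: "x \<noteq> 0 \<Longrightarrow> x * recip x = 1"
  unfolding recip_def by (rule someI_ex) (rule right_inverse_exists)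

lemma recip_mult: "x \<noteq> 0 \<Longrightarrow> recip x * x = 1"
  using mult_recip by (simp add: mult.commute)

lemma recip_nonzero: "x \<noteq> 0 \<Longrightarrow> recip x \<noteq> 0"
  using mult_recip by fastforce

lemma mult_left_cancel: "x \<noteq> 0 \<Longrightarrow> x * y = x * z \<Longrightarrow> y = (z::'a)"
  by (metis recip_mult mult.assoc mult_1_left)

lemma mult_nonzero: "x \<noteq> 0 \<Longrightarrow> y \<noteq> 0 \<Longrightarrow> x * y \<noteq> (0::'a)"
  by (metis mult_left_cancel mult_zero_right)

lemma power_nonzero: "x \<noteq> 0 \<Longrightarrow> x ^ n \<noteq> (0::'a)"
  by (induction n) (simp_all add: mult_nonzero)

lemma power_mult_recip_power: "x \<noteq> 0 \<Longrightarrow> x ^ n * recip x ^ n = 1"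
  by (metis mult_recip power_mult_distrib power_one)

lemma natural_le_refl [simp]: "x \<preceq> (x::'a)"
  unfolding natural_le_def by (rule add_idem)

lemma natural_le_trans [trans]: "x \<preceq> y \<Longrightarrow> y \<preceq> z \<Longrightarrow> x \<preceq> (z::'a)"
  unfolding natural_le_def by (metis add.assoc)

lemma natural_le_antisym: "x \<preceq> y \<Longrightarrow> y \<preceq> x \<Longrightarrow> x = (y::'a)"
  unfolding natural_le_def by (metis add.commute)

lemma natural_le_add_iff: "x + y \<preceq> (z::'a) \<longleftrightarrow> x \<preceq> z \<and> y \<preceq> z"
  unfolding natural_le_def by (metis add.assoc add.left_commute add_idem)

lemma natural_le_add1 [simp]: "x \<preceq> x + (y::'a)"
  and natural_le_add2 [simp]: "y \<preceq> x + (y::'a)"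
  using natural_le_add_iff natural_le_refl by blast+

lemma zero_natural_le [simp]: "0 \<preceq> (x::'a)"
  by (simp add: natural_le_def)

lemma one_natural_le_imp_nonzero: "1 \<preceq> x \<Longrightarrow> x \<noteq> (0::'a)"
  by (auto simp: natural_le_def)

lemma natural_le_mult_right: "x \<preceq> y \<Longrightarrow> x * z \<preceq> y * (z::'a)"
  unfolding natural_le_def by (metis distrib_right)

lemma natural_le_mult: "a \<preceq> b \<Longrightarrow> c \<preceq> d \<Longrightarrow> a * c \<preceq> b * (d::'a)"
  by (metis natural_le_mult_right natural_le_trans mult.commute)

lemma natural_le_power: "a \<preceq> b \<Longrightarrow> a ^ n \<preceq> (b::'a) ^ n"
  by (induction n) (simp_all add: natural_le_mult)

lemma one_natural_le_power: "1 \<preceq> a \<Longrightarrow> 1 \<preceq> (a::'a) ^ n"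
  using natural_le_power by fastforce

lemma natural_le_mult_right_iff: "z \<noteq> 0 \<Longrightarrow> x * z \<preceq> y * z \<longleftrightarrow> x \<preceq> (y::'a)"
  by (metis natural_le_mult_right mult_recip mult.assoc mult_1_right)

lemma natural_le_one_iff_recip: "x \<noteq> 0 \<Longrightarrow> x \<preceq> 1 \<longleftrightarrow> 1 \<preceq> recip (x::'a)"
  by (metis natural_le_mult_right_iff mult_1_left recip_mult)

lemma one_natural_le_iff_recip: "x \<noteq> 0 \<Longrightarrow> 1 \<preceq> x \<longleftrightarrow> recip x \<preceq> (1::'a)"
  by (metis natural_le_mult_right_iff mult_1_left recip_mult)

lemma sum_natural_le_mono:
  "(\<And>s. s \<in> A \<Longrightarrow> f s \<preceq> (g s::'a)) \<Longrightarrow> sum f A \<preceq> sum g A"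
  by (induction A rule: infinite_finite_induct)
    (auto simp: natural_le_add_iff intro: natural_le_trans[OF _ natural_le_add1]
       natural_le_trans[OF _ natural_le_add2])

lemma member_natural_le_sum: "finite A \<Longrightarrow> s \<in> A \<Longrightarrow> f s \<preceq> (sum f A::'a)"
  by (metis natural_le_add1 sum.remove)

lemma sum_natural_le_iff: "finite A \<Longrightarrow> sum f A \<preceq> c \<longleftrightarrow> (\<forall>s\<in>A. f s \<preceq> (c::'a))"
  by (induction A rule: finite_induct) (auto simp: natural_le_add_iff)

lemma add_sum_cong:
  "(\<And>s. s \<in> A \<Longrightarrow> c + f s = c + g s) \<Longrightarrow> c + sum f A = c + (sum g A::'a)"
proof (induction A rule: infinite_finite_induct)
  case (insert x F)
  have "c + sum f (insert x F) = (c + f x) + (c + sum f F)"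
    using insert(1,2) by (simp add: add_left_distrib_idem[symmetric])
  also have "\<dots> = (c + g x) + (c + sum g F)" using insert(3,4) by simp
  also have "\<dots> = c + sum g (insert x F)"
    using insert(1,2) by (simp add: add_left_distrib_idem[symmetric])
  finally show ?case .
qed simp_all

lemma add_one_power_Suc: "(z + 1) ^ Suc n = (z + 1) ^ n + (z::'a) ^ Suc n"
proof (induction n)
  case 0
  show ?case by (simp add: add.commute)
next
  case (Suc n)
  have "(z + 1) ^ n * z \<preceq> (z + 1) ^ Suc n"
    using natural_le_mult[OF natural_le_refl natural_le_add1, of "(z + 1) ^ n" z 1]
    by (simp add: mult.commute)
  then have absorb: "(z + 1) ^ n * z + (z + 1) ^ Suc n = (z + 1) ^ Suc n"
    unfolding natural_le_def .
  have "(z + 1) ^ Suc (Suc n) = (z + 1) ^ Suc n * z + (z + 1) ^ Suc n"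
    by (simp add: algebra_simps)
  also have "\<dots> = z ^ Suc (Suc n) + ((z + 1) ^ n * z + (z + 1) ^ Suc n)"
    by (simp only: Suc) (simp add: algebra_simps)
  also have "\<dots> = z ^ Suc (Suc n) + (z + 1) ^ Suc n" by (simp only: absorb)
  finally show ?case by (metis add.commute)
qed

text \<open>By the previous identity the hypothesis gives \<open>(z + 1)\<^sup>d = (z + 1)\<^sup>d\<^sup>-\<^sup>1\<close>; cancelling the
  unit \<open>(z + 1)\<^sup>d\<^sup>-\<^sup>1\<close> leaves \<open>z + 1 = 1\<close>.\<close>
lemma natural_le_one_if_power_natural_le_one:
  assumes "z ^ d \<preceq> (1::'a)" "d \<ge> 1"
  shows "z \<preceq> 1"
proof -
  obtain n where d: "d = Suc n" using assms(2) by (cases d) auto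
  have "z ^ d \<preceq> (z + 1) ^ n"
    using assms(1) one_natural_le_power[OF natural_le_add2] natural_le_trans by blast
  then have "(z + 1) ^ n * (z + 1) = (z + 1) ^ n * 1"
    using add_one_power_Suc[of z n] unfolding d natural_le_def by (simp add: add.commute mult.commute)
  moreover have "(z + 1) ^ n \<noteq> 0"
    using power_nonzero one_natural_le_imp_nonzero natural_le_add2 by blast
  ultimately show ?thesis
    unfolding natural_le_def using mult_left_cancel by blast
qed

lemma eq_one_if_power_eq_one:
  assumes "z \<noteq> 0" "z ^ d = (1::'a)" "d \<ge> 1"
  shows "z = 1"
proof (rule natural_le_antisym)
  show "z \<preceq> 1" using natural_le_one_if_power_natural_le_one[of z d] assms by simp
  have "recip z ^ d = 1" using power_mult_recip_power[OF assms(1), of d] assms(2) by simp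
  then have "recip z \<preceq> 1" using natural_le_one_if_power_natural_le_one[of "recip z" d] assms(3) by simp
  then show "1 \<preceq> z" using one_natural_le_iff_recip[OF assms(1)] by simp
qed

lemma inj_power:
  assumes "x \<noteq> 0" "x \<noteq> (1::'a)"
  shows "inj (\<lambda>n. x ^ n)"
proof (rule injI)
  have less: "i < j \<Longrightarrow> x ^ i \<noteq> x ^ j" for i j
  proof
    assume "i < j" "x ^ i = x ^ j"
    have "x ^ i * x ^ (j - i) = x ^ j" using \<open>i < j\<close> by (simp flip: power_add)
    then have "x ^ i * x ^ (j - i) = x ^ i * 1" using \<open>x ^ i = x ^ j\<close> by simp
    then have "x ^ (j - i) = 1" using mult_left_cancel power_nonzero assms(1) by blast
    with \<open>i < j\<close> show False using eq_one_if_power_eq_one assms by simp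
  qed
  show "x ^ i = x ^ j \<Longrightarrow> i = j" for i j
    using less[of i j] less[of j i] by (cases i j rule: linorder_cases) auto
qed

lemma powers_unbounded:
  assumes "finite {x. 1 \<preceq> x \<and> x \<preceq> c}" "1 \<preceq> a" "a \<noteq> (1::'a)"
  shows "\<exists>n. \<not> a ^ n \<preceq> c"
proof (rule ccontr)
  assume "\<not> ?thesis"
  then have "range (\<lambda>n. a ^ n) \<subseteq> {x. 1 \<preceq> x \<and> x \<preceq> c}"
    using one_natural_le_power[OF assms(2)] by auto
  then have "finite (range (\<lambda>n::nat. a ^ n))" using assms(1) finite_subset by blast
  moreover have "inj (\<lambda>n. a ^ n)"
    using inj_power one_natural_le_imp_nonzero assms(2,3) by blast
  ultimately show False using finite_imageD by fastforce
qed

lemma power_mult_eq_add_power: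
  assumes "1 \<preceq> a" "1 \<preceq> b" "a * b = a + (b::'a)"
  shows "a ^ n * b = a ^ n + b"
proof (induction n)
  case 0
  show ?case using assms(2) unfolding natural_le_def by simp
next
  case (Suc n)
  have "1 * a \<preceq> a ^ n * a"
    using one_natural_le_power[OF assms(1)] by (rule natural_le_mult_right)
  then have "a \<preceq> a ^ Suc n" by (simp add: mult.commute)
  then have "a + a ^ Suc n = a ^ Suc n" unfolding natural_le_def .
  have "a ^ Suc n * b = a * (a ^ n * b)" by (simp add: mult.assoc)
  also have "\<dots> = a ^ Suc n + a * b" using Suc by (simp add: distrib_left)
  also have "\<dots> = (a + a ^ Suc n) + b" using assms(3) by (simp add: ac_simps)
  finally show ?case using \<open>a + a ^ Suc n = a ^ Suc n\<close> by simp
qed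

lemma power_mult_eq_add_powers:
  assumes "1 \<preceq> a" "1 \<preceq> b" "a * b = a + (b::'a)"
  shows "a ^ n * b ^ m = a ^ n + b ^ m"
proof -
  have "b * a ^ n = b + a ^ n"
    using power_mult_eq_add_power[OF assms, of n] by (simp add: ac_simps)
  then have "b ^ m * a ^ n = b ^ m + a ^ n"
    using power_mult_eq_add_power[OF assms(2) one_natural_le_power[OF assms(1)]] by blast
  then show ?thesis by (simp add: ac_simps)
qed

text \<open>For \<open>x \<noteq> 0\<close>, the elements \<open>a = x + 1\<close> and \<open>b = x\<^sup>-\<^sup>1 + 1\<close> satisfy \<open>a b = a + b\<close>.\<close>
lemma natural_le_total_if_no_orthogonal_pair:
  assumes orth: "\<And>a b. 1 \<preceq> a \<Longrightarrow> 1 \<preceq> b \<Longrightarrow> a * b = a + b \<Longrightarrow> a = 1 \<or> b = (1::'a)"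
  shows "x \<preceq> y \<or> y \<preceq> (x::'a)"
proof -
  have one: "z \<preceq> 1 \<or> 1 \<preceq> z" if "z \<noteq> 0" for z :: 'a
  proof -
    have "(z + 1) * (recip z + 1) = (z * recip z + z) + (recip z + 1)"
      by (simp only: distrib_right distrib_left mult_1_left mult_1_right ac_simps)
    also have "\<dots> = (z + 1) + (recip z + 1)" using mult_recip[OF that] by (simp add: ac_simps)
    finally have "z + 1 = 1 \<or> recip z + 1 = 1" using orth by simp
    then show ?thesis using one_natural_le_iff_recip[OF that] unfolding natural_le_def by auto
  qed
  show ?thesis
  proof (cases "x = 0 \<or> y = 0")
    case False
    then have "y * recip x \<noteq> 0" using mult_nonzero recip_nonzero by blast
    moreover have "y * recip x * x = y" using False by (simp add: recip_mult mult.assoc)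
    ultimately show ?thesis using one[of "y * recip x"] natural_le_mult_right
      by (metis mult_1_left)
  qed auto
qed

definition zpow :: "'a \<Rightarrow> int \<Rightarrow> 'a" where
  "zpow x k = x ^ nat k * recip x ^ nat (- k)"

lemma zpow_of_nat [simp]: "zpow x (int n) = x ^ n"
  by (simp add: zpow_def)

lemma zpow_uminus_of_nat: "zpow x (- int n) = recip x ^ n"
  by (simp add: zpow_def)

lemma zpow_zero [simp]: "zpow x 0 = 1"
  by (simp add: zpow_def)

lemma power_mult_recip_power_eq_zpow:
  assumes "x \<noteq> 0"
  shows "x ^ p * recip x ^ q = zpow x (int p - int q)"
proof (cases "q \<le> p")
  case True
  then have "x ^ p * recip x ^ q = x ^ (p - q) * (x ^ q * recip x ^ q)"
    by (metis le_add_diff_inverse2 mult.assoc power_add)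
  then show ?thesis using True power_mult_recip_power[OF assms] by (simp add: zpow_def nat_diff_distrib)
next
  case False
  then have "x ^ p * recip x ^ q = recip x ^ (q - p) * (x ^ p * recip x ^ p)"
    by (metis le_add_diff_inverse2 nat_le_linear mult.left_commute power_add)
  then show ?thesis using False power_mult_recip_power[OF assms] by (simp add: zpow_def nat_diff_distrib)
qed

lemma zpow_add:
  assumes "x \<noteq> 0"
  shows "zpow x (a + b) = zpow x a * zpow x b"
proof -
  have "zpow x a * zpow x b = x ^ (nat a + nat b) * recip x ^ (nat (- a) + nat (- b))"
    by (simp add: zpow_def power_add ac_simps)
  also have "\<dots> = zpow x (int (nat a + nat b) - int (nat (- a) + nat (- b)))"
    by (rule power_mult_recip_power_eq_zpow[OF assms])
  also have "int (nat a + nat b) - int (nat (- a) + nat (- b)) = a + b"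
    by linarith
  finally show ?thesis by simp
qed

lemma zpow_nonzero: "x \<noteq> 0 \<Longrightarrow> zpow x k \<noteq> 0"
  using zpow_add[of x k "- k"] by force

lemma zpow_inj:
  assumes "x \<noteq> 0" "x \<noteq> 1"
  shows "inj (zpow x)"
proof (rule injI)
  fix a b
  assume "zpow x a = zpow x b"
  then have "zpow x (a - b) * zpow x b = 1 * zpow x b"
    using zpow_add[OF assms(1), of "a - b" b] by simp
  then have one: "zpow x (a - b) = 1"
    using mult_left_cancel zpow_nonzero[OF assms(1)] by (metis mult.commute)
  have "zpow x (b - a) * zpow x (a - b) = 1"
    using zpow_add[OF assms(1), of "b - a" "a - b"] by simp
  then have "zpow x \<bar>a - b\<bar> = 1" using one by (simp add: abs_if)
  then have "x ^ nat \<bar>a - b\<bar> = x ^ 0"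
    using zpow_of_nat[of x "nat \<bar>a - b\<bar>"] by simp
  then have "nat \<bar>a - b\<bar> = 0" by (rule injD[OF inj_power[OF assms]])
  then show "a = b" by simp
qed

lemma zpow_mono:
  assumes "1 \<preceq> x" "a \<le> b"
  shows "zpow x a \<preceq> zpow x b"
proof -
  have "zpow x (b - a) = x ^ nat (b - a)"
    using zpow_of_nat[of x "nat (b - a)"] assms(2) by simp
  then have "zpow x b = zpow x a * x ^ nat (b - a)"
    using zpow_add[OF one_natural_le_imp_nonzero[OF assms(1)], of a "b - a"] by simp
  then show ?thesis
    using natural_le_mult[OF natural_le_refl one_natural_le_power[OF assms(1)], of "zpow x a"]
    by simp
qed

lemma zpow_max: "1 \<preceq> x \<Longrightarrow> zpow x a + zpow x b = zpow x (max a b)"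
  using zpow_mono[of x a b] zpow_mono[of x b a]
  by (auto simp: natural_le_def max_def add.commute)

end

lemma hom_to_zmax_inv:
  fixes \<chi> :: "zmax \<Rightarrow> 'a::comm_semiring_1"
  assumes "bij \<chi>" "zmax_hom_to \<chi>"
  shows "hom_to_zmax (inv \<chi>)"
proof -
  have surj: "\<exists>a. x = \<chi> a" for x using bij_is_surj[OF assms(1)] by (auto simp: surj_def)
  have inv: "inv \<chi> (\<chi> a) = a" for a using bij_is_inj[OF assms(1)] by simp
  have add: "\<chi> (zmax_add a b) = \<chi> a + \<chi> b" and mult: "\<chi> (zmax_mult a b) = \<chi> a * \<chi> b"
    and zero: "\<chi> zmax_zero = 0" and one: "\<chi> zmax_one = 1" for a b
    using assms(2) unfolding zmax_hom_to_def by auto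
  show ?thesis
    unfolding hom_to_zmax_def
  proof (intro conjI allI)
    fix x y
    obtain a b where x: "x = \<chi> a" and y: "y = \<chi> b" using surj by blast
    show "inv \<chi> (x + y) = zmax_add (inv \<chi> x) (inv \<chi> y)"
      unfolding x y by (simp only: inv flip: add)
    show "inv \<chi> (x * y) = zmax_mult (inv \<chi> x) (inv \<chi> y)"
      unfolding x y by (simp only: inv flip: mult)
  next
    show "inv \<chi> 0 = zmax_zero" and "inv \<chi> 1 = zmax_one"
      by (simp_all only: inv flip: zero one)
  qed
qed

locale discrete_idempotent_semifield = idempotent_semifield +
  assumes natural_le_total: "x \<preceq> y \<or> y \<preceq> (x::'a::comm_semiring_1)"
    and finite_interval: "finite {x::'a. 1 \<preceq> x \<and> x \<preceq> c}"
    and nontrivial: "\<exists>a::'a. 1 \<preceq> a \<and> a \<noteq> 1"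
begin

definition atom :: "'a \<Rightarrow> bool" where
  "atom g \<longleftrightarrow> 1 \<preceq> g \<and> g \<noteq> 1 \<and> (\<forall>y. 1 \<preceq> y \<longrightarrow> y \<preceq> g \<longrightarrow> y = 1 \<or> y = g)"

lemma finite_has_natural_le_least:
  "finite A \<Longrightarrow> A \<noteq> {} \<Longrightarrow> \<exists>g\<in>A. \<forall>y\<in>A. g \<preceq> (y::'a)"
proof (induction A rule: finite_ne_induct)
  case (insert x F)
  then obtain g where "g \<in> F" "\<forall>y\<in>F. g \<preceq> y" by blast
  then show ?case using natural_le_total natural_le_trans by (metis insert_iff natural_le_refl)
qed simp

lemma atom_exists: "\<exists>g. atom g"
proof -
  obtain a :: 'a where a: "1 \<preceq> a" "a \<noteq> 1" using nontrivial by blast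
  let ?A = "{x. 1 \<preceq> x \<and> x \<preceq> a \<and> x \<noteq> 1}"
  have "finite ?A" using finite_interval[of a] by (rule finite_subset[rotated]) auto
  moreover have "a \<in> ?A" using a by simp
  ultimately obtain g where "g \<in> ?A" "\<forall>y\<in>?A. g \<preceq> y"
    using finite_has_natural_le_least by blast
  then have "atom g" unfolding atom_def using natural_le_antisym natural_le_trans by blast
  then show ?thesis ..
qed

text \<open>For \<open>k\<close> maximal with \<open>g\<^sup>k \<preceq> x\<close>, the element \<open>x g\<^sup>-\<^sup>k\<close> lies between \<open>1\<close> and \<open>g\<close>.\<close>
lemma one_natural_le_eq_power_atom:
  assumes g: "atom g" and x: "1 \<preceq> x"
  shows "\<exists>k. x = g ^ k"
proof -
  have g0: "g \<noteq> 0" and g1: "g \<noteq> 1" "1 \<preceq> g"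
    using g one_natural_le_imp_nonzero unfolding atom_def by blast+
  define N where "N = {k. g ^ k \<preceq> x}"
  have "(\<lambda>k. g ^ k) ` N \<subseteq> {y. 1 \<preceq> y \<and> y \<preceq> x}"
    unfolding N_def using one_natural_le_power[OF g1(2)] by blast
  then have "finite ((\<lambda>k. g ^ k) ` N)" using finite_interval finite_subset by blast
  then have finN: "finite N"
    using inj_power[OF g0 g1(1)] by (metis finite_imageD inj_on_subset subset_UNIV)
  define k where "k = Max N"
  have "k \<in> N" unfolding k_def using finN x by (intro Max_in) (auto simp: N_def intro!: exI[of _ 0])
  then have low: "g ^ k \<preceq> x" unfolding N_def by simp
  have "Suc k \<notin> N" using Max_ge[OF finN] unfolding k_def by fastforce
  then have up: "x \<preceq> g ^ Suc k" unfolding N_def using natural_le_total by blast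
  define y where "y = x * recip g ^ k"
  have "1 \<preceq> y"
    using natural_le_mult_right[OF low, of "recip g ^ k"] power_mult_recip_power[OF g0]
    unfolding y_def by simp
  moreover have "y \<preceq> g"
    using natural_le_mult_right[OF up, of "recip g ^ k"] power_mult_recip_power[OF g0, of k]
    unfolding y_def by (simp add: ac_simps)
  moreover have "x = y * g ^ k"
    using power_mult_recip_power[OF g0, of k] unfolding y_def by (simp add: ac_simps)
  ultimately show ?thesis
    using g unfolding atom_def by (metis mult_1_left power_Suc mult.commute)
qed

lemma nonzero_eq_zpow_atom:
  assumes g: "atom g" and x: "x \<noteq> 0"
  shows "\<exists>k. x = zpow g k"
  using natural_le_total[of x 1]
proof
  assume "1 \<preceq> x"
  then obtain k where "x = g ^ k" using one_natural_le_eq_power_atom[OF g] by blast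
  then show ?thesis by (metis zpow_of_nat)
next
  assume "x \<preceq> 1"
  then have "1 \<preceq> recip x" using natural_le_one_iff_recip[OF x] by simp
  then obtain k where k: "recip x = g ^ k" using one_natural_le_eq_power_atom[OF g] by blast
  have g0: "g \<noteq> 0" using g one_natural_le_imp_nonzero unfolding atom_def by blast
  have "x = x * (g ^ k * recip g ^ k)" using power_mult_recip_power[OF g0] by simp
  also have "\<dots> = (x * recip x) * recip g ^ k" using k by (simp add: ac_simps)
  also have "\<dots> = zpow g (- int k)" using mult_recip[OF x] by (simp add: zpow_uminus_of_nat)
  finally show ?thesis ..
qed

lemma atom_zpow_iso:
  assumes g: "atom g"
  shows "bij (case_option 0 (zpow g))" and "zmax_hom_to (case_option 0 (zpow g))"
proof -
  have g0: "g \<noteq> 0" and g1: "g \<noteq> 1" "1 \<preceq> g"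
    using g one_natural_le_imp_nonzero unfolding atom_def by blast+
  show "bij (case_option 0 (zpow g))"
  proof (rule bijI)
    show "inj (case_option 0 (zpow g))"
      using injD[OF zpow_inj[OF g0 g1(1)]] zpow_nonzero[OF g0]
      by (intro injI) (auto split: option.splits)
    have "y \<in> range (case_option 0 (zpow g))" for y
    proof (cases "y = 0")
      case True
      then show ?thesis by (simp add: rev_image_eqI[of None])
    next
      case False
      then obtain k where "y = zpow g k" using nonzero_eq_zpow_atom[OF g] by blast
      then show ?thesis by (simp add: rev_image_eqI[of "Some k"])
    qed
    then show "surj (case_option 0 (zpow g))" by blast
  qed
  show "zmax_hom_to (case_option 0 (zpow g))"
    unfolding zmax_hom_to_def zmax_zero_def zmax_one_def
  proof (intro conjI allI)
    fix x y :: zmax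
    show "case_option 0 (zpow g) (zmax_add x y) = case_option 0 (zpow g) x + case_option 0 (zpow g) y"
      by (cases x; cases y) (simp_all add: zpow_max[OF g1(2)])
    show "case_option 0 (zpow g) (zmax_mult x y) = case_option 0 (zpow g) x * case_option 0 (zpow g) y"
      by (cases x; cases y) (simp_all add: zpow_add[OF g0])
  qed simp_all
qed

theorem iso_zmax_exists: "\<exists>\<psi>::'a \<Rightarrow> zmax. bij \<psi> \<and> hom_to_zmax \<psi>"
proof -
  obtain g where "atom g" using atom_exists ..
  then show ?thesis
    using atom_zpow_iso bij_imp_bij_inv hom_to_zmax_inv by blast
qed

end

lemma additive_int_fun_eq_mult:
  fixes h :: "int \<Rightarrow> int"
  assumes add: "\<And>a b. h (a + b) = h a + h b"
  shows "h k = k * h 1"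
proof (induction k rule: int_induct[where k = 0])
  case base
  show ?case using add[of 0 0] by simp
next
  case (step1 i)
  show ?case using add[of i 1] step1(2) by (simp add: algebra_simps)
next
  case (step2 i)
  show ?case using add[of "i - 1" 1] step2(2) by (simp add: algebra_simps)
qed

lemma injective_zmax_endomorphism_eq_Fn_embed:
  fixes \<chi> :: "zmax \<Rightarrow> zmax"
  assumes add: "\<And>x y. \<chi> (zmax_add x y) = zmax_add (\<chi> x) (\<chi> y)"
    and mult: "\<And>x y. \<chi> (zmax_mult x y) = zmax_mult (\<chi> x) (\<chi> y)"
    and zero: "\<chi> None = None" and one: "\<chi> (Some 0) = Some 0" and "inj \<chi>"
  shows "\<exists>n>0. \<forall>x. \<chi> x = Fn_embed n x"
proof -
  define h where "h k = the (\<chi> (Some k))" for k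
  have "\<chi> (Some k) \<noteq> None" for k
    using mult[of "Some k" "Some (- k)"] one by (cases "\<chi> (Some k)") auto
  then have h: "\<chi> (Some k) = Some (h k)" for k
    unfolding h_def by simp
  have "h (a + b) = h a + h b" for a b using mult[of "Some a" "Some b"] by (simp add: h)
  then have linear: "h k = k * h 1" for k by (rule additive_int_fun_eq_mult)
  have "h 1 \<ge> 0" using add[of "Some 0" "Some 1"] one by (simp add: h)
  moreover have "h 1 \<noteq> 0" using injD[OF \<open>inj \<chi>\<close>, of "Some 1" "Some 0"] one by (auto simp: h)
  moreover have "\<chi> x = Fn_embed (nat (h 1)) x" for x
  proof (cases x)
    case (Some k)
    then show ?thesis using linear[of k] \<open>h 1 \<ge> 0\<close> by (simp add: Fn_embed_def h mult.commute)
  qed (simp add: Fn_embed_def zero)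
  ultimately show ?thesis by (intro exI[of _ "nat (h 1)"]) auto
qed

lemma exists_less_eq_if_finite_range:
  fixes f :: "nat \<Rightarrow> 'b"
  assumes "finite (range f)"
  shows "\<exists>i j. i < j \<and> f i = f j"
proof -
  have "\<not> inj f" using assms finite_imageD by fastforce
  then obtain i j where "i \<noteq> j" "f i = f j" unfolding inj_def by blast
  then show ?thesis by (metis linorder_neqE_nat)
qed

locale spanned_zmax_extension =
  fixes \<phi> :: "zmax \<Rightarrow> 'a::comm_semiring_1" and S :: "'a set"
  assumes extension: "zmax_extension \<phi>"
    and finite_generators: "finite S"
    and nonzero_generators: "0 \<notin> S"
    and span: "\<exists>c. x = (\<Sum>s\<in>S. \<phi> (c s) * s)"
begin

definition upow :: "int \<Rightarrow> 'a" where
  "upow k = \<phi> (Some k)"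

lemma phi_None [simp]: "\<phi> None = 0"
  and upow_add: "upow (a + b) = upow a * upow b"
  and upow_zero [simp]: "upow 0 = 1"
  and upow_max: "upow a + upow b = upow (max a b)"
  using extension unfolding zmax_extension_def zmax_hom_to_def zmax_zero_def zmax_one_def upow_def
  by (metis zmax_mult.simps(1) zmax_add.simps(3))+

lemma upow_inj: "upow a = upow b \<Longrightarrow> a = b"
  using extension unfolding zmax_extension_def upow_def by (auto dest: injD)

lemma upow_le_iff [simp]: "upow a \<preceq> upow b \<longleftrightarrow> a \<le> b"
  unfolding natural_le_def upow_max by (metis upow_inj max.absorb_iff2)

lemma upow_le_one_iff [simp]: "upow a \<preceq> 1 \<longleftrightarrow> a \<le> 0"
  and one_le_upow_iff [simp]: "1 \<preceq> upow a \<longleftrightarrow> 0 \<le> a"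
  using upow_le_iff[of a 0] upow_le_iff[of 0 a] by simp_all

lemma upow_mult_upow_uminus: "upow a * upow (- a) = 1"
  by (metis upow_add upow_zero add.right_inverse)

sublocale idempotent_semifield
proof
  show "1 + 1 = (1::'a)" using upow_max[of 0 0] by simp
  show "\<exists>y. x * y = 1" if "x \<noteq> 0" for x :: 'a
    using extension that unfolding zmax_extension_def is_semifield_def by blast
qed

lemma sum_natural_le_upow_mult_sum:
  assumes "\<forall>s\<in>S. (c s = None) = (c' s = None)"
  shows "\<exists>M\<ge>0. (\<Sum>s\<in>S. \<phi> (c s) * s) \<preceq> upow M * (\<Sum>s\<in>S. \<phi> (c' s) * s)"
proof -
  define M where "M = Max (insert 0 ((\<lambda>s. the (c s) - the (c' s)) ` S))"
  have "\<phi> (c s) * s \<preceq> upow M * (\<phi> (c' s) * s)" if s: "s \<in> S" for s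
  proof (cases "c s")
    case (Some b)
    then obtain a where a: "c' s = Some a" using assms s by fastforce
    have "b - a \<in> insert 0 ((\<lambda>s. the (c s) - the (c' s)) ` S)" using s Some a by force
    then have "b - a \<le> M" unfolding M_def using finite_generators by (intro Max_ge) auto
    then have "upow b \<preceq> upow M * upow a" by (metis upow_add upow_le_iff diff_add_cancel add_right_mono)
    then have "upow b * s \<preceq> upow M * (upow a * s)"
      using natural_le_mult_right[of _ _ s] by (metis mult.assoc)
    then show ?thesis using Some a by (simp add: upow_def)
  qed simp
  then have "(\<Sum>s\<in>S. \<phi> (c s) * s) \<preceq> upow M * (\<Sum>s\<in>S. \<phi> (c' s) * s)"
    unfolding sum_distrib_left by (rule sum_natural_le_mono)
  moreover have "M \<ge> 0" unfolding M_def using finite_generators by simp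
  ultimately show ?thesis by blast
qed

lemma upow_power: "upow a ^ n = upow (a * int n)"
  by (induction n) (simp_all add: upow_add[symmetric] algebra_simps)

lemma natural_le_upow_if_power_natural_le_upow:
  assumes "x ^ d \<preceq> upow M" "d \<ge> 1" "M \<ge> 0"
  shows "x \<preceq> upow M"
proof -
  have "(x * upow (- M)) ^ d = x ^ d * upow (- M * int d)"
    by (simp add: power_mult_distrib upow_power)
  also have "\<dots> \<preceq> upow M * upow (- M * int d)"
    using assms(1) by (rule natural_le_mult_right)
  also have "\<dots> = upow (M - M * int d)" by (simp flip: upow_add)
  also have "\<dots> \<preceq> upow 0"
    by (rule upow_le_iff[THEN iffD2]) (use assms(2,3) mult_left_mono[of 1 "int d" M] in simp)
  finally have "x * upow (- M) \<preceq> 1" unfolding upow_zero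
    using assms(2) natural_le_one_if_power_natural_le_one by blast
  then have "x * upow (- M) * upow M \<preceq> 1 * upow M" by (rule natural_le_mult_right)
  moreover have "x * upow (- M) * upow M = x * (upow M * upow (- M))"
    by (simp only: mult.assoc mult.commute[of "upow (- M)"])
  ultimately show ?thesis by (simp only: upow_mult_upow_uminus mult_1_right mult_1_left)
qed

text \<open>Finite generation makes the extension archimedean: writing the powers of \<open>x\<close> in terms
  of the generators, two of them, \<open>x\<^sup>i\<close> and \<open>x\<^sup>j\<close> with \<open>i < j\<close>, have the same support, so
  \<open>x\<^sup>j\<^sup>-\<^sup>i\<close> is bounded by a power of \<open>u\<close>.\<close>
lemma natural_le_upow_exists:
  assumes "x \<noteq> 0"
  shows "\<exists>M. x \<preceq> upow M"
proof -
  have "\<forall>j. \<exists>c. x ^ j = (\<Sum>s\<in>S. \<phi> (c s) * s)" using span by blast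
  from choice[OF this] obtain C where C: "\<And>j. x ^ j = (\<Sum>s\<in>S. \<phi> (C j s) * s)" by blast
  have "range (\<lambda>j. {s\<in>S. C j s \<noteq> None}) \<subseteq> Pow S" by blast
  then have "finite (range (\<lambda>j. {s\<in>S. C j s \<noteq> None}))"
    using finite_generators finite_subset by blast
  then obtain i j where ij: "i < j" "{s\<in>S. C i s \<noteq> None} = {s\<in>S. C j s \<noteq> None}"
    using exists_less_eq_if_finite_range by blast
  then have "\<forall>s\<in>S. (C j s = None) = (C i s = None)" by blast
  then obtain M where "M \<ge> 0" "x ^ j \<preceq> upow M * x ^ i"
    using sum_natural_le_upow_mult_sum unfolding C by blast
  moreover have "x ^ j = x ^ (j - i) * x ^ i" using ij(1) by (simp flip: power_add)
  ultimately have "x ^ (j - i) \<preceq> upow M"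
    using natural_le_mult_right_iff[OF power_nonzero[OF assms]] by simp
  then have "x \<preceq> upow M" using natural_le_upow_if_power_natural_le_upow ij(1) \<open>M \<ge> 0\<close> by simp
  then show ?thesis ..
qed

lemma upow_natural_le_exists:
  assumes "x \<noteq> 0"
  shows "\<exists>m. upow m \<preceq> x"
proof -
  obtain m where "recip x \<preceq> upow m" using natural_le_upow_exists recip_nonzero assms by blast
  then have "recip x * (x * upow (- m)) \<preceq> upow m * (x * upow (- m))"
    by (rule natural_le_mult_right)
  moreover have "recip x * (x * upow (- m)) = upow (- m)"
    using recip_mult[OF assms] by (simp add: mult.assoc[symmetric])
  moreover have "upow m * (x * upow (- m)) = x"
    using upow_mult_upow_uminus[of m] by (simp add: mult.left_commute)
  ultimately have "upow (- m) \<preceq> x" by simp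
  then show ?thesis ..
qed

lemma generators_bounded: "\<exists>K\<ge>0. \<forall>s\<in>S. upow (- K) \<preceq> s \<and> s \<preceq> upow K"
proof -
  have "\<forall>s\<in>S. \<exists>k. upow (- k) \<preceq> s \<and> s \<preceq> upow k"
  proof
    fix s assume "s \<in> S"
    then have "s \<noteq> 0" using nonzero_generators by blast
    then obtain m1 m2 where m: "s \<preceq> upow m1" "upow m2 \<preceq> s"
      using natural_le_upow_exists upow_natural_le_exists by blast
    have "upow (- max m1 (- m2)) \<preceq> upow m2" and "upow m1 \<preceq> upow (max m1 (- m2))" by simp_all
    then show "\<exists>k. upow (- k) \<preceq> s \<and> s \<preceq> upow k"
      using m natural_le_trans by blast
  qed
  then obtain f where f: "\<forall>s\<in>S. upow (- f s) \<preceq> s \<and> s \<preceq> upow (f s)"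
    by metis
  define K where "K = Max (insert 0 (f ` S))"
  have "f s \<le> K" if "s \<in> S" for s
    unfolding K_def using that finite_generators by (auto intro: Max_ge)
  then have "\<forall>s\<in>S. upow (- K) \<preceq> s \<and> s \<preceq> upow K"
    using f by (meson neg_le_iff_le natural_le_trans upow_le_iff)
  moreover have "K \<ge> 0" unfolding K_def using finite_generators by simp
  ultimately show ?thesis by blast
qed

text \<open>Coefficients of exponent at most \<open>-K\<close> give terms below \<open>1\<close>, which the summand \<open>1\<close>
  absorbs; coefficients of exponent above \<open>M + K\<close> would push \<open>x\<close> above \<open>upow M\<close>.\<close>
lemma interval_element_repr:
  assumes bounds: "\<forall>s\<in>S. upow (- K) \<preceq> s \<and> s \<preceq> upow K"
    and x: "1 \<preceq> x" "x \<preceq> upow M"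
  shows "\<exists>c. (\<forall>s\<in>S. c s \<in> insert None (Some ` {- K<..M + K})) \<and> x = 1 + (\<Sum>s\<in>S. \<phi> (c s) * s)"
proof -
  obtain c where c: "x = (\<Sum>s\<in>S. \<phi> (c s) * s)" using span by blast
  define c' where "c' s = (case c s of None \<Rightarrow> None | Some k \<Rightarrow> if - K < k then Some k else None)" for s
  have term_le: "upow k * s \<preceq> x" if "s \<in> S" "c s = Some k" for s k
    using member_natural_le_sum[OF finite_generators \<open>s \<in> S\<close>, of "\<lambda>s. \<phi> (c s) * s"] that
    unfolding c by (simp add: upow_def)
  have "c' s \<in> insert None (Some ` {- K<..M + K})" if s: "s \<in> S" for s
  proof (cases "c s")
    case (Some k)
    have "upow (k - K) = upow k * upow (- K)" by (simp flip: upow_add)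
    also have "\<dots> \<preceq> upow k * s" using bounds s natural_le_mult[OF natural_le_refl] by blast
    also have "\<dots> \<preceq> upow M" using term_le[OF s Some] x(2) natural_le_trans by blast
    finally show ?thesis using Some by (auto simp: c'_def)
  qed (simp add: c'_def)
  moreover have "1 + \<phi> (c s) * s = 1 + \<phi> (c' s) * s" if s: "s \<in> S" for s
  proof (cases "c s")
    case (Some k)
    show ?thesis
    proof (cases "- K < k")
      case False
      have "upow k * s \<preceq> upow k * upow K" using bounds s natural_le_mult[OF natural_le_refl] by blast
      also have "\<dots> \<preceq> 1" using False by (simp flip: upow_add)
      finally show ?thesis using Some False unfolding natural_le_def
        by (simp add: c'_def upow_def add.commute)
    qed (simp add: Some c'_def)
  qed (simp add: c'_def)
  then have "1 + x = 1 + (\<Sum>s\<in>S. \<phi> (c' s) * s)"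
    unfolding c by (rule add_sum_cong)
  then have "x = 1 + (\<Sum>s\<in>S. \<phi> (c' s) * s)"
    using x(1) unfolding natural_le_def by simp
  ultimately show ?thesis by blast
qed

lemma finite_interval_upow: "finite {x. 1 \<preceq> x \<and> x \<preceq> upow M}"
proof -
  obtain K where bounds: "\<forall>s\<in>S. upow (- K) \<preceq> s \<and> s \<preceq> upow K"
    using generators_bounded by blast
  define R where "R = insert None (Some ` {- K<..M + K})"
  define F where "F = {c. \<forall>s. (s \<in> S \<longrightarrow> c s \<in> R) \<and> (s \<notin> S \<longrightarrow> c s = None)}"
  have "finite F" unfolding F_def R_def using finite_generators by (intro finite_set_of_finite_funs) auto
  moreover have "{x. 1 \<preceq> x \<and> x \<preceq> upow M} \<subseteq> (\<lambda>c. 1 + (\<Sum>s\<in>S. \<phi> (c s) * s)) ` F"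
  proof
    fix x assume "x \<in> {x. 1 \<preceq> x \<and> x \<preceq> upow M}"
    then obtain c where c: "\<forall>s\<in>S. c s \<in> R" "x = 1 + (\<Sum>s\<in>S. \<phi> (c s) * s)"
      using interval_element_repr[OF bounds] unfolding R_def by blast
    define c' where "c' s = (if s \<in> S then c s else None)" for s
    have "c' \<in> F" using c(1) unfolding F_def c'_def by simp
    moreover have "x = 1 + (\<Sum>s\<in>S. \<phi> (c' s) * s)" using c(2) unfolding c'_def by simp
    ultimately show "x \<in> (\<lambda>c. 1 + (\<Sum>s\<in>S. \<phi> (c s) * s)) ` F" by blast
  qed
  ultimately show ?thesis by (rule finite_surj)
qed

lemma finite_natural_le_interval: "finite {x::'a. 1 \<preceq> x \<and> x \<preceq> c}"
proof (cases "c = 0")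
  case True
  then have empty: "{x. 1 \<preceq> x \<and> x \<preceq> c} = {}"
    using one_natural_le_imp_nonzero by (auto simp: natural_le_def)
  show ?thesis unfolding empty by simp
next
  case False
  then obtain M where "c \<preceq> upow M" using natural_le_upow_exists by blast
  then have "{x. 1 \<preceq> x \<and> x \<preceq> c} \<subseteq> {x. 1 \<preceq> x \<and> x \<preceq> upow M}"
    using natural_le_trans by blast
  then show ?thesis using finite_interval_upow finite_subset by blast
qed

lemma upow_natural_le_if_not_natural_le_upow:
  assumes bounds: "\<forall>s\<in>S. upow (- K) \<preceq> s \<and> s \<preceq> upow K"
    and "\<not> x \<preceq> upow k"
  shows "upow (k - 2 * K) \<preceq> x"
proof -
  obtain c where c: "x = (\<Sum>s\<in>S. \<phi> (c s) * s)" using span by blast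
  then obtain s where s: "s \<in> S" and big: "\<not> \<phi> (c s) * s \<preceq> upow k"
    using assms(2) sum_natural_le_iff[OF finite_generators] by blast
  then obtain j where j: "c s = Some j" by (cases "c s") auto
  have "upow j * s \<preceq> upow j * upow K" using bounds s natural_le_mult[OF natural_le_refl] by blast
  then have "upow j * s \<preceq> upow (j + K)" by (simp add: upow_add)
  moreover have "\<not> upow j * s \<preceq> upow k" using big j by (simp add: upow_def)
  ultimately have "\<not> upow (j + K) \<preceq> upow k" using natural_le_trans by metis
  then have "k < j + K" by simp
  then have "upow (k - 2 * K) \<preceq> upow j * upow (- K)" by (simp flip: upow_add)
  also have "\<dots> \<preceq> upow j * s" using bounds s natural_le_mult[OF natural_le_refl] by blast
  also have "\<dots> \<preceq> x"
    using member_natural_le_sum[OF finite_generators s, of "\<lambda>s. \<phi> (c s) * s"] j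
    unfolding c by (simp add: upow_def)
  finally show ?thesis .
qed

text \<open>If \<open>a, b \<succeq> 1\<close> with \<open>a b = a + b\<close> and \<open>a \<noteq> 1\<close>, choose \<open>n\<close> with \<open>a\<^sup>n\<close> far above \<open>1\<close>;
  then \<open>w = a\<^sup>n b\<^sup>-\<^sup>n\<close> satisfies \<open>w + 1 = a\<^sup>n\<close>, so \<open>w\<close> is large too, hence \<open>w \<succeq> 1\<close> and
  \<open>w = a\<^sup>n\<close>, which forces \<open>b\<^sup>n = 1\<close>.\<close>
lemma no_orthogonal_pair:
  fixes a b :: 'a
  assumes a: "1 \<preceq> a" and b: "1 \<preceq> b" and ab: "a * b = a + b"
  shows "a = 1 \<or> b = 1"
proof (rule ccontr)
  assume "\<not> ?thesis"
  then have "a \<noteq> 1" "b \<noteq> 1" by auto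
  have a0: "a \<noteq> 0" and b0: "b \<noteq> 0" using a b one_natural_le_imp_nonzero by blast+
  obtain K where "K \<ge> 0" and bounds: "\<forall>s\<in>S. upow (- K) \<preceq> s \<and> s \<preceq> upow K"
    using generators_bounded by blast
  then have one_le: "1 \<preceq> upow (2 * K)" by simp
  obtain n where n: "\<not> a ^ n \<preceq> upow (2 * K)"
    using powers_unbounded[OF finite_natural_le_interval a \<open>a \<noteq> 1\<close>] by blast
  then have "n \<ge> 1" using one_le by (cases n) auto
  define w where "w = a ^ n * recip b ^ n"
  have "w + 1 = (a ^ n + b ^ n) * recip b ^ n"
    unfolding w_def using power_mult_recip_power[OF b0] by (simp add: distrib_right)
  also have "\<dots> = a ^ n"
    using power_mult_eq_add_powers[OF a b ab, of n n] power_mult_recip_power[OF b0]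
    by (metis mult.assoc mult_1_right)
  finally have w1: "w + 1 = a ^ n" .
  then have "\<not> w \<preceq> upow (2 * K)" using n one_le natural_le_add_iff by metis
  then have "1 \<preceq> w" using upow_natural_le_if_not_natural_le_upow[OF bounds] by fastforce
  then have "a ^ n * recip b ^ n = a ^ n * 1"
    using w1 unfolding w_def natural_le_def by (simp add: add.commute)
  then have "recip b ^ n = 1" using mult_left_cancel power_nonzero[OF a0] by blast
  then have "b ^ n = 1" using power_mult_recip_power[OF b0, of n] by simp
  then show False using eq_one_if_power_eq_one b0 \<open>n \<ge> 1\<close> \<open>b \<noteq> 1\<close> by blast
qed

sublocale discrete_idempotent_semifield
proof
  show "x \<preceq> y \<or> y \<preceq> x" for x y :: 'a
    using natural_le_total_if_no_orthogonal_pair no_orthogonal_pair by blast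
  show "finite {x. 1 \<preceq> x \<and> x \<preceq> c}" for c :: 'a
    by (rule finite_natural_le_interval)
  have "upow 1 \<noteq> upow 0" using upow_inj by fastforce
  then show "\<exists>a. 1 \<preceq> a \<and> a \<noteq> (1::'a)" by (intro exI[of _ "upow 1"]) simp
qed

lemma extension_iso_to_Fn: "\<exists>n>0. iso_to_Fn \<phi> n"
proof -
  obtain \<psi> :: "'a \<Rightarrow> zmax" where "bij \<psi>" and \<psi>: "hom_to_zmax \<psi>"
    using iso_zmax_exists by blast
  have \<phi>: "zmax_hom_to \<phi>" and "inj \<phi>" using extension by (simp_all add: zmax_extension_def)
  have "\<exists>n>0. \<forall>x. (\<psi> \<circ> \<phi>) x = Fn_embed n x"
  proof (rule injective_zmax_endomorphism_eq_Fn_embed)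
    show "inj (\<psi> \<circ> \<phi>)" using \<open>bij \<psi>\<close> \<open>inj \<phi>\<close> by (simp add: bij_is_inj inj_compose)
  qed (use \<phi> \<psi> in \<open>simp_all add: hom_to_zmax_def zmax_hom_to_def zmax_zero_def zmax_one_def\<close>)
  then show ?thesis using \<open>bij \<psi>\<close> \<psi> unfolding iso_to_Fn_def by auto
qed

end

theorem mainTheorem1:
  fixes \<phi> :: "zmax \<Rightarrow> 'a::comm_semiring_1"
  assumes "finite_zmax_extension \<phi>"
  shows "\<exists>n::nat. n > 0 \<and> iso_to_Fn \<phi> n"
proof -
  obtain S :: "'a set" where "finite S" and span: "\<forall>x. \<exists>c. x = (\<Sum>s\<in>S. \<phi> (c s) * s)"
    using assms unfolding finite_zmax_extension_def by blast
  have "(\<Sum>s\<in>S. \<phi> (c s) * s) = (\<Sum>s\<in>S - {0}. \<phi> (c s) * s)" for c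
    using \<open>finite S\<close> by (intro sum.mono_neutral_right) auto
  then interpret spanned_zmax_extension \<phi> "S - {0}"
    using assms \<open>finite S\<close> span unfolding finite_zmax_extension_def
    by unfold_locales auto
  show ?thesis using extension_iso_to_Fn by blast
qed

end
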